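(* Let $(s_n)$ be a sequence in $\mathbb{R}^{\mathbb{Z}_<}$ all of whose members are real numbers (i.e. every coefficient other than the $\epsilon^0$-coefficient is zero). Then $(s_n)$ is hyper-Cauchy if and only if there exists $N\in\mathbb{N}$ such that $s_m=s_N$ for all $m\ge N$.
   Context: $\mathbb{R}^{\mathbb{Z}_<}$ is the set of formal series $\sum_{i\ge -k}a_i\epsilon^i$ ($k\in\mathbb{N}\cup\{0\}$, $a_i\in\mathbb{R}$), with coefficientwise addition, Cauchy-product multiplication and lexicographic order ($\mathbf{x}<\mathbf{y}$ iff at the least index where coefficients differ, $\mathbf{x}$'s is smaller); $|\cdot|$ is the associated absolute value; $\epsilon=\langle\widehat0,1,0,\dots\rangle$. $(s_n)$ is hyper-Cauchy iff for every $\iota\in\mathbb{R}^{\mathbb{Z}_<}$ with $\iota>0$ there is $N\in\mathbb{N}$ such that $|s_l-s_m|<\iota$ for all $l,m\ge N$. *)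

theory Defs
  imports "HOL-Computational_Algebra.Formal_Laurent_Series"
begin

text \<open>R^{Z<} is modelled by the library type real fls (formal Laurent series with
  support bounded below); addition and multiplication are the library's.\<close>

definition hlt :: "real fls \<Rightarrow> real fls \<Rightarrow> bool" where
  "hlt x y \<longleftrightarrow> (\<exists>n::int. (\<forall>k<n. fls_nth x k = fls_nth y k) \<and> fls_nth x n < fls_nth y n)"

definition habs :: "real fls \<Rightarrow> real fls" where
  "habs x = (if hlt x 0 then - x else x)"

definition is_real_fls :: "real fls \<Rightarrow> bool" where
  "is_real_fls x \<longleftrightarrow> (\<forall>k::int. k \<noteq> 0 \<longrightarrow> fls_nth x k = 0)"

definition hyper_cauchy :: "(nat \<Rightarrow> real fls) \<Rightarrow> bool" where
  "hyper_cauchy s \<longleftrightarrow> (\<forall>\<iota>. hlt 0 \<iota> \<longrightarrow>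
     (\<exists>N::nat. \<forall>l m. N \<le> l \<and> N \<le> m \<longrightarrow> hlt (habs (s l - s m)) \<iota>))"

end

theory Submission
  imports Defs
begin

text \<open>A real number is a constant Laurent series, and on constants the lexicographic order and
  absolute value are those of \<open>\<real>\<close>. A constant lies below \<open>\<epsilon>\<close> exactly when it is
  \<open>\<le> 0\<close>, so a real difference of absolute value below the positive infinitesimal \<open>\<epsilon>\<close> vanishes.
  Taking \<open>\<iota> = \<epsilon>\<close> in the hyper-Cauchy condition therefore forces the sequence to be eventually
  constant; conversely an eventually constant sequence has differences \<open>0\<close>, which lie below
  every positive \<open>\<iota>\<close>.\<close>

lemma is_real_fls_iff_const: "is_real_fls x \<longleftrightarrow> x = fls_const (fls_nth x 0)"
proof
  assume "is_real_fls x"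
  then show "x = fls_const (fls_nth x 0)"
    by (intro fls_eqI) (simp add: is_real_fls_def)
next
  assume "x = fls_const (fls_nth x 0)"
  then have "fls_nth x k = fls_nth (fls_const (fls_nth x 0)) k" for k
    by (rule arg_cong)
  then show "is_real_fls x"
    by (simp add: is_real_fls_def)
qed

lemma is_real_fls_diff: "is_real_fls x \<Longrightarrow> is_real_fls y \<Longrightarrow> is_real_fls (x - y)"
  by (simp add: is_real_fls_def)

lemma habs_0 [simp]: "habs 0 = 0"
  by (simp add: habs_def hlt_def)

lemma hlt_fls_const: "hlt (fls_const a) (fls_const b) \<longleftrightarrow> a < b"
proof
  assume "hlt (fls_const a) (fls_const b)"
  then obtain n :: int where at: "fls_nth (fls_const a) n < fls_nth (fls_const b) n"
    by (auto simp: hlt_def)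
  from at have "n = 0"
    by (auto split: if_splits)
  with at show "a < b"
    by simp
next
  assume "a < b"
  then show "hlt (fls_const a) (fls_const b)"
    unfolding hlt_def by (intro exI[of _ 0]) simp
qed

lemma habs_fls_const [simp]: "habs (fls_const a) = fls_const \<bar>a\<bar>"
  using hlt_fls_const[of a 0] by (simp add: habs_def)

lemma hlt_fls_const_X: "hlt (fls_const a) fls_X \<longleftrightarrow> a \<le> 0"
proof
  assume "hlt (fls_const a) fls_X"
  then obtain n :: int where below: "\<forall>k<n. fls_nth (fls_const a) k = fls_nth fls_X k"
    and at: "fls_nth (fls_const a) n < fls_nth fls_X n"
    by (auto simp: hlt_def)
  consider "n = 0" | "n > 0"
    using at by (cases n "0::int" rule: linorder_cases) auto
  then show "a \<le> 0"
  proof cases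
    case 1
    with at show ?thesis by simp
  next
    case 2
    with below have "fls_nth (fls_const a) 0 = fls_nth fls_X 0"
      by blast
    then show ?thesis by simp
  qed
next
  assume "a \<le> 0"
  then consider "a < 0" | "a = 0"
    by linarith
  then show "hlt (fls_const a) fls_X"
  proof cases
    case 1
    then show ?thesis unfolding hlt_def by (intro exI[of _ 0]) simp
  next
    case 2
    then show ?thesis unfolding hlt_def by (intro exI[of _ 1]) simp
  qed
qed

lemma hlt_0_fls_X: "hlt 0 fls_X"
  using hlt_fls_const_X[of 0] by simp

lemma real_fls_habs_hlt_fls_X_imp_0:
  assumes "is_real_fls d" and "hlt (habs d) fls_X"
  shows "d = 0"
proof -
  have d: "d = fls_const (fls_nth d 0)"
    using assms(1) is_real_fls_iff_const by blast
  with assms(2) have "\<bar>fls_nth d 0\<bar> \<le> 0"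
    by (metis habs_fls_const hlt_fls_const_X)
  then show ?thesis
    by (subst d) simp
qed

lemma hyper_cauchy_real_imp_eventually_const:
  assumes real: "\<And>n. is_real_fls (s n)" and "hyper_cauchy s"
  shows "\<exists>N. \<forall>m\<ge>N. s m = s N"
proof -
  obtain N where N: "\<forall>l m. N \<le> l \<and> N \<le> m \<longrightarrow> hlt (habs (s l - s m)) fls_X"
    using \<open>hyper_cauchy s\<close> hlt_0_fls_X unfolding hyper_cauchy_def by blast
  have "s m = s N" if "N \<le> m" for m
  proof -
    have "hlt (habs (s m - s N)) fls_X"
      using N that by blast
    with is_real_fls_diff[OF real real] have "s m - s N = 0"
      by (rule real_fls_habs_hlt_fls_X_imp_0)
    then show ?thesis
      by simp
  qed
  then show ?thesis
    by blast
qed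

lemma eventually_const_imp_hyper_cauchy:
  assumes "\<forall>m\<ge>N. s m = s N"
  shows "hyper_cauchy s"
  unfolding hyper_cauchy_def
proof (intro allI impI exI[of _ N])
  fix \<iota> l m assume "hlt 0 \<iota>" and "N \<le> l \<and> N \<le> m"
  then have "s l - s m = 0"
    using assms by (metis diff_self)
  with \<open>hlt 0 \<iota>\<close> show "hlt (habs (s l - s m)) \<iota>"
    by simp
qed

theorem mainTheorem18:
  fixes s :: "nat \<Rightarrow> real fls"
  assumes "\<And>n. is_real_fls (s n)"
  shows "hyper_cauchy s \<longleftrightarrow> (\<exists>N::nat. \<forall>m\<ge>N. s m = s N)"
proof
  show "hyper_cauchy s \<Longrightarrow> \<exists>N. \<forall>m\<ge>N. s m = s N"
    using assms by (rule hyper_cauchy_real_imp_eventually_const)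
  show "\<exists>N. \<forall>m\<ge>N. s m = s N \<Longrightarrow> hyper_cauchy s"
    by (elim exE) (rule eventually_const_imp_hyper_cauchy)
qed

end
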